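(* Assume the Richardson limit shape $\mathcal{S}$ is uniformly curved, and let $z,r,\delta,\beta,\alpha$ and the sets $\mathcal{R}_0^n,\mathcal{B}_0^n,\mathcal{R}_1^n$ be as defined in the context. Then for all sufficiently large $n$ and all $x\in\mathcal{R}_1^n$, \[d(x,\mathcal{R}_0^n)+4(\delta n)^\beta<d(x,\mathcal{B}_0^n).\]
   Context: $\mathcal{S}$ is the limit shape of the Richardson model on $\mathbb{Z}^d$ (each unoccupied site becomes occupied at rate equal to its number of occupied neighbours): the nonrandom compact convex set with nonempty interior such that for every finite nonempty initial set and $\epsilon>0$, a.s. $(1-\epsilon)\mathcal{S}\subseteq\hat Z(s)/s\subseteq(1+\epsilon)\mathcal{S}$ for large $s$, $\hat Z=\{x:\operatorname{dist}_\infty(x,Z)\le1/2\}$. Uniformly curved: there is $\varrho<\infty$ such that each $z\in\partial\mathcal{S}$ lies on the boundary of a Euclidean ball of radius $\varrho$ containing $\mathcal{S}$. Richardson norm $|x|=\inf\{t>0:x\in t\mathcal{S}\}$, metric $d(x,y)=|x-y|$, $d(x,A)=\inf_{y\in A}d(x,y)$, $\pi x=x/|x|$. $D(x;\rho)=\{y:d(x,y)\le\rho\}$, $D(x;\rho_1,\rho_2)=D(x;\rho_2)\setminus D(x;\rho_1)$. Angular sector: $\mathcal{A}(z;\varrho)=\{y\ne0:d(\pi y,z)<\varrho\}$ for $z\in\partial\mathcal{S}$. Fix $z\in\partial\mathcal{S}$, $r>0$, $\delta\in(0,1)$, $\beta\in(1/2,1)$, $\alpha\in(1/2,1)$ with $(\beta+1)/2<\alpha$;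 for $n\ge1$, $A_1=\mathcal{A}(z;r)$, $A_2=\mathcal{A}(z;r+n^{\alpha-1})$, $\mathcal{R}_0^n=D(0;n/(1+\delta),n-n^\beta)\cap A_2\cap\mathbb{Z}^d$, $\mathcal{B}_0^n=(D(0;n/(1+\delta))\cup(D(0;n/(1+\delta),n+n^\beta)\cap A_2^c))\cap\mathbb{Z}^d$, $\mathcal{R}_1^n=D(0;n,n(1+\delta)-(n+\delta n)^\beta)\cap A_1\cap\mathbb{Z}^d$. *)

theory Defs
  imports "HOL-Analysis.Analysis"
begin

definition int_lattice :: "(real^'d) set" where
  "int_lattice = {x. \<forall>i. x $ i \<in> \<int>}"

definition rnorm :: "(real^'d) set \<Rightarrow> real^'d \<Rightarrow> real" where
  "rnorm S x = Inf {t. 0 < t \<and> x \<in> (\<lambda>v. t *\<^sub>R v) ` S}"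

definition rdist :: "(real^'d) set \<Rightarrow> real^'d \<Rightarrow> real^'d \<Rightarrow> real" where
  "rdist S x y = rnorm S (x - y)"

definition rsetdist :: "(real^'d) set \<Rightarrow> real^'d \<Rightarrow> (real^'d) set \<Rightarrow> real" where
  "rsetdist S x A = Inf (rdist S x ` A)"

definition rproj :: "(real^'d) set \<Rightarrow> real^'d \<Rightarrow> real^'d" where
  "rproj S x = (1 / rnorm S x) *\<^sub>R x"

definition rball :: "(real^'d) set \<Rightarrow> real^'d \<Rightarrow> real \<Rightarrow> (real^'d) set" where
  "rball S x \<rho> = {y. rdist S x y \<le> \<rho>}"

definition rannulus :: "(real^'d) set \<Rightarrow> real^'d \<Rightarrow> real \<Rightarrow> real \<Rightarrow> (real^'d) set" where
  "rannulus S x \<rho>1 \<rho>2 = rball S x \<rho>2 - rball S x \<rho>1"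

definition sector :: "(real^'d) set \<Rightarrow> real^'d \<Rightarrow> real \<Rightarrow> (real^'d) set" where
  "sector S z \<rho> = {y. y \<noteq> 0 \<and> rdist S (rproj S y) z < \<rho>}"

definition uniformly_curved :: "(real^'d) set \<Rightarrow> bool" where
  "uniformly_curved S \<longleftrightarrow>
     (\<exists>\<rho>::real. \<forall>w\<in>frontier S. \<exists>c. S \<subseteq> cball c \<rho> \<and> w \<in> sphere c \<rho>)"

definition R0 :: "(real^'d) set \<Rightarrow> real^'d \<Rightarrow> real \<Rightarrow> real \<Rightarrow> real \<Rightarrow> real \<Rightarrow> nat \<Rightarrow> (real^'d) set" where
  "R0 S z r \<delta> \<beta> \<alpha> n =
     rannulus S 0 (real n / (1 + \<delta>)) (real n - real n powr \<beta>)
     \<inter> sector S z (r + real n powr (\<alpha> - 1)) \<inter> int_lattice"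

definition B0 :: "(real^'d) set \<Rightarrow> real^'d \<Rightarrow> real \<Rightarrow> real \<Rightarrow> real \<Rightarrow> real \<Rightarrow> nat \<Rightarrow> (real^'d) set" where
  "B0 S z r \<delta> \<beta> \<alpha> n =
     (rball S 0 (real n / (1 + \<delta>))
      \<union> (rannulus S 0 (real n / (1 + \<delta>)) (real n + real n powr \<beta>)
         \<inter> - sector S z (r + real n powr (\<alpha> - 1))))
     \<inter> int_lattice"

definition R1 :: "(real^'d) set \<Rightarrow> real^'d \<Rightarrow> real \<Rightarrow> real \<Rightarrow> real \<Rightarrow> nat \<Rightarrow> (real^'d) set" where
  "R1 S z r \<delta> \<beta> n =
     rannulus S 0 (real n) (real n * (1 + \<delta>) - (real n + \<delta> * real n) powr \<beta>)
     \<inter> sector S z r \<inter> int_lattice"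

end

(*
  Let |.| be the gauge of S, a norm with unit ball S, and write x in R_1^n as x = a u with |u| = 1,
  a > n and u within r of z.  Walking inward along the ray through u to level n - n^beta - K and
  rounding to the lattice (every point of R^d is within gauge distance K of Z^d) gives a point of
  R_0^n, so d(x, R_0^n) <= a - n + n^beta + 2K.  A point y of B_0^n either has |y| <= n/(1+delta),
  and then d(x,y) >= a - n/(1+delta), or has level b = |y| <= n + n^beta and direction v with
  |v - u| >= n^(alpha-1).  In the second case uniform curvature provides a Euclidean ball containing S
  with u on its boundary; testing a u - b v against the outer normal there gives
  |a u - b v| >= a - b + kappa b |v - u|^2, a gain of order n^(2 alpha - 1), which dominates n^beta
  because 2 alpha - 1 > beta.
*)
theory Submission
  imports Defs "HOL-Real_Asymp.Real_Asymp"
begin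

lemma int_lattice_approx: "\<exists>q \<in> int_lattice. norm (p - q) \<le> real CARD('d)"
  for p :: "real^'d"
proof -
  define q :: "real^'d" where "q = (\<chi> i. of_int \<lfloor>p $ i\<rfloor>)"
  have "norm (p - q) \<le> (\<Sum>i\<in>UNIV. \<bar>(p - q) $ i\<bar>)" by (rule norm_le_l1_cart)
  also have "\<dots> \<le> (\<Sum>i\<in>(UNIV::'d set). 1)" by (intro sum_mono) (simp add: q_def, linarith)
  finally have "norm (p - q) \<le> real CARD('d)" by simp
  moreover have "q \<in> int_lattice" by (simp add: int_lattice_def q_def)
  ultimately show ?thesis by blast
qed

lemma inner_sphere_cball_le:
  fixes c u w :: "'a::real_inner"
  assumes "w \<in> cball c \<rho>" "u \<in> sphere c \<rho>"
  shows "(w - u) \<bullet> (u - c) \<le> - (norm (w - u))\<^sup>2 / 2"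
proof -
  have "norm ((w - u) + (u - c)) \<le> norm (u - c)"
    using assms by (simp add: dist_norm norm_minus_commute)
  then have "(norm ((w - u) + (u - c)))\<^sup>2 \<le> (norm (u - c))\<^sup>2" by (simp add: power_mono)
  then show ?thesis unfolding dot_norm[of "w - u" "u - c"] by (simp add: field_simps)
qed

definition curvature_gain :: "(real^'d) set \<Rightarrow> real \<Rightarrow> bool" where
  "curvature_gain S \<kappa> \<longleftrightarrow> (\<forall>u v a b. rnorm S u = 1 \<longrightarrow> rnorm S v = 1 \<longrightarrow> 0 \<le> b \<longrightarrow>
     a - b + \<kappa> * b * (rnorm S (v - u))\<^sup>2 \<le> rnorm S (a *\<^sub>R u - b *\<^sub>R v))"

locale symmetric_convex_body =
  fixes S :: "(real^'d) set"
  assumes compact_S: "compact S" and convex_S: "convex S"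
    and zero_in_interior: "0 \<in> interior S" and symmetric_S: "\<forall>x\<in>S. - x \<in> S"
begin

definition dilations :: "real^'d \<Rightarrow> real set" where
  "dilations w = {t. 0 < t \<and> (1/t) *\<^sub>R w \<in> S}"

lemma rnorm_eq_Inf_dilations: "rnorm S w = Inf (dilations w)"
proof -
  have "{t. 0 < t \<and> w \<in> (\<lambda>v. t *\<^sub>R v) ` S} = dilations w"
    unfolding dilations_def image_def by (force simp: field_simps)
  then show ?thesis by (simp add: rnorm_def)
qed

lemma zero_in_S: "0 \<in> S"
  using zero_in_interior interior_subset by blast

lemma scaleR_mem_S: "s \<in> S \<Longrightarrow> 0 \<le> c \<Longrightarrow> c \<le> 1 \<Longrightarrow> c *\<^sub>R s \<in> S"
  using convexD[OF convex_S, of s 0 c "1 - c"] zero_in_S by auto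

lemma dilations_upward:
  assumes "t \<in> dilations w" "t \<le> t'" shows "t' \<in> dilations w"
proof -
  have t: "0 < t" "(1/t) *\<^sub>R w \<in> S" using assms by (auto simp: dilations_def)
  have "(t/t') *\<^sub>R ((1/t) *\<^sub>R w) \<in> S" by (rule scaleR_mem_S[OF t(2)]) (use t assms in auto)
  then show ?thesis using t assms by (simp add: dilations_def)
qed

lemma dilations_large:
  assumes "0 < \<epsilon>" "cball 0 \<epsilon> \<subseteq> S" "norm w / \<epsilon> < t" shows "t \<in> dilations w"
proof -
  have "0 \<le> norm w / \<epsilon>" using assms(1) by simp
  then have t: "0 < t" using assms(3) by linarith
  then have "norm ((1/t) *\<^sub>R w) \<le> \<epsilon>" using assms by (simp add: field_simps)
  then show ?thesis using t assms(2) by (auto simp: dilations_def)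
qed

lemma dilations_nonempty: "dilations w \<noteq> {}"
proof -
  obtain \<epsilon> where "0 < \<epsilon>" "cball 0 \<epsilon> \<subseteq> S" using zero_in_interior mem_interior_cball by blast
  then show ?thesis using dilations_large[of \<epsilon> w "norm w / \<epsilon> + 1"] by auto
qed

lemma rnorm_le_dilation: "t \<in> dilations w \<Longrightarrow> rnorm S w \<le> t"
  unfolding rnorm_eq_Inf_dilations
  by (rule cInf_lower) (auto intro: bdd_belowI[of _ 0] simp: dilations_def)

lemma rnorm_greatest: "(\<And>t. t \<in> dilations w \<Longrightarrow> c \<le> t) \<Longrightarrow> c \<le> rnorm S w"
  unfolding rnorm_eq_Inf_dilations by (rule cInf_greatest[OF dilations_nonempty])

lemma rnorm_less_imp_dilation: "rnorm S w < t \<Longrightarrow> t \<in> dilations w"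
  using cInf_lessD[OF dilations_nonempty] dilations_upward
  unfolding rnorm_eq_Inf_dilations by (metis less_le)

lemma rnorm_nonneg: "0 \<le> rnorm S w"
  by (rule rnorm_greatest) (simp add: dilations_def)

lemma rnorm_le_norm_div:
  assumes "0 < \<epsilon>" "cball 0 \<epsilon> \<subseteq> S" shows "rnorm S w \<le> norm w / \<epsilon>"
proof (rule field_le_epsilon)
  fix e :: real assume "0 < e"
  then show "rnorm S w \<le> norm w / \<epsilon> + e"
    using assms by (intro rnorm_le_dilation dilations_large) auto
qed

lemma norm_le_mult_rnorm:
  assumes "0 < R" "\<forall>x\<in>S. norm x \<le> R" shows "norm w \<le> R * rnorm S w"
proof -
  have "norm w / R \<le> rnorm S w"
  proof (rule rnorm_greatest)
    fix t assume "t \<in> dilations w"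
    then have "0 < t" "norm ((1/t) *\<^sub>R w) \<le> R" using assms by (auto simp: dilations_def)
    then show "norm w / R \<le> t" using assms by (simp add: field_simps)
  qed
  then show ?thesis using assms by (simp add: field_simps)
qed

lemma rnorm_zero [simp]: "rnorm S 0 = 0"
proof -
  obtain \<epsilon> where "0 < \<epsilon>" "cball 0 \<epsilon> \<subseteq> S" using zero_in_interior mem_interior_cball by blast
  then show ?thesis using rnorm_le_norm_div[of \<epsilon> 0] rnorm_nonneg[of 0] by simp
qed

lemma rnorm_pos_iff: "0 < rnorm S w \<longleftrightarrow> w \<noteq> 0"
proof
  show "w \<noteq> 0" if "0 < rnorm S w" using that by auto
  obtain R where "0 < R" "\<forall>x\<in>S. norm x \<le> R"
    using compact_imp_bounded[OF compact_S] bounded_pos by blast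
  then show "0 < rnorm S w" if "w \<noteq> 0"
    using that norm_le_mult_rnorm[of R w] rnorm_nonneg[of w] by (auto simp: less_le)
qed

lemma rnorm_le_one_iff: "rnorm S w \<le> 1 \<longleftrightarrow> w \<in> S"
proof
  assume w: "rnorm S w \<le> 1"
  have "\<exists>y\<in>S. dist y w < e" if e: "0 < e" for e
  proof -
    define t where "t = 1 + e / (norm w + 1)"
    have "0 < norm w + 1" using norm_ge_zero[of w] by linarith
    then have t: "1 < t" using e by (simp add: t_def)
    then have "(1/t) *\<^sub>R w \<in> S" using w rnorm_less_imp_dilation[of w t] by (simp add: dilations_def)
    moreover have "dist ((1/t) *\<^sub>R w) w = ((t - 1) / t) * norm w"
    proof -
      have "(1/t) *\<^sub>R w - w = ((1 - t) / t) *\<^sub>R w" using t by (simp add: algebra_simps diff_divide_distrib)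
      then show ?thesis using t by (simp add: dist_norm)
    qed
    moreover have "((t - 1) / t) * norm w \<le> (t - 1) * norm w"
      using t by (intro mult_right_mono) (auto simp: divide_le_eq)
    moreover have "(t - 1) * norm w < e"
      using e \<open>0 < norm w + 1\<close> by (simp add: t_def field_simps)
    ultimately show ?thesis by (metis order.strict_trans1)
  qed
  then show "w \<in> S"
    using closed_approachable compact_imp_closed[OF compact_S] by blast
next
  assume "w \<in> S" then show "rnorm S w \<le> 1"
    by (intro rnorm_le_dilation) (simp add: dilations_def)
qed

lemma rnorm_scaleR_le: assumes "0 < c" shows "rnorm S (c *\<^sub>R w) \<le> c * rnorm S w"
proof (rule field_le_epsilon)
  fix e :: real assume "0 < e"
  then have "rnorm S w + e / c \<in> dilations w" using assms by (intro rnorm_less_imp_dilation) simp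
  then have "c * (rnorm S w + e / c) \<in> dilations (c *\<^sub>R w)" using assms by (simp add: dilations_def)
  then have "rnorm S (c *\<^sub>R w) \<le> c * (rnorm S w + e / c)" by (rule rnorm_le_dilation)
  then show "rnorm S (c *\<^sub>R w) \<le> c * rnorm S w + e" using assms by (simp add: distrib_left)
qed

lemma rnorm_minus: "rnorm S (- w) = rnorm S w"
proof -
  have "(1/t) *\<^sub>R (- w) \<in> S \<longleftrightarrow> (1/t) *\<^sub>R w \<in> S" for t
    using symmetric_S by (metis minus_minus scaleR_minus_right)
  then show ?thesis by (simp add: rnorm_eq_Inf_dilations dilations_def)
qed

lemma rnorm_scaleR: "rnorm S (c *\<^sub>R w) = \<bar>c\<bar> * rnorm S w"
proof -
  have pos: "rnorm S (c *\<^sub>R w) = c * rnorm S w" if "0 < c" for c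
  proof (rule antisym)
    show "rnorm S (c *\<^sub>R w) \<le> c * rnorm S w" using that by (rule rnorm_scaleR_le)
    have "rnorm S w \<le> (1/c) * rnorm S (c *\<^sub>R w)"
      using rnorm_scaleR_le[of "1/c" "c *\<^sub>R w"] that by simp
    then show "c * rnorm S w \<le> rnorm S (c *\<^sub>R w)" using that by (simp add: field_simps)
  qed
  consider "c = 0" | "0 < c" | "c < 0" by linarith
  then show ?thesis
  proof cases
    case 3
    then show ?thesis using pos[of "- c"] rnorm_minus[of "c *\<^sub>R w"] by simp
  qed (simp_all add: pos)
qed

lemma rnorm_triangle: "rnorm S (v + w) \<le> rnorm S v + rnorm S w"
proof (rule field_le_epsilon)
  fix e :: real assume e: "0 < e"
  define s t where "s = rnorm S v + e/2" and "t = rnorm S w + e/2"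
  have "s \<in> dilations v" "t \<in> dilations w"
    using e by (auto simp: s_def t_def intro!: rnorm_less_imp_dilation)
  then have st: "0 < s" "(1/s) *\<^sub>R v \<in> S" "0 < t" "(1/t) *\<^sub>R w \<in> S" by (auto simp: dilations_def)
  then have "(s/(s+t)) *\<^sub>R ((1/s) *\<^sub>R v) + (t/(s+t)) *\<^sub>R ((1/t) *\<^sub>R w) \<in> S"
    by (intro convexD[OF convex_S]) (auto simp: add_divide_distrib[symmetric])
  moreover have "(s/(s+t)) *\<^sub>R ((1/s) *\<^sub>R v) + (t/(s+t)) *\<^sub>R ((1/t) *\<^sub>R w) = (1/(s+t)) *\<^sub>R (v + w)"
    using st by (simp add: scaleR_add_right)
  ultimately have "s + t \<in> dilations (v + w)" using st by (simp add: dilations_def)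
  then have "rnorm S (v + w) \<le> s + t" by (rule rnorm_le_dilation)
  then show "rnorm S (v + w) \<le> rnorm S v + rnorm S w + e" by (simp add: s_def t_def)
qed

lemma rnorm_triangle_diff: "rnorm S (a - c) \<le> rnorm S (a - b) + rnorm S (b - c)"
  using rnorm_triangle[of "a - b" "b - c"] by simp

lemma rnorm_diff_ge: "rnorm S a - rnorm S b \<le> rnorm S (a - b)"
  using rnorm_triangle[of "a - b" b] by simp

lemma rnorm_minus_commute: "rnorm S (a - b) = rnorm S (b - a)"
  using rnorm_minus[of "a - b"] by simp

lemma rnorm_eq_one_imp_frontier: assumes "rnorm S u = 1" shows "u \<in> frontier S"
proof -
  have "u \<notin> interior S"
  proof
    assume "u \<in> interior S"
    then obtain e where e: "0 < e" "cball u e \<subseteq> S" using mem_interior_cball by blast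
    define c where "c = 1 + e / (norm u + 1)"
    have "0 < norm u + 1" using norm_ge_zero[of u] by linarith
    then have c: "1 < c" using e by (simp add: c_def)
    have "dist u (c *\<^sub>R u) = norm ((c - 1) *\<^sub>R u)"
      by (simp add: dist_norm algebra_simps norm_minus_commute)
    also have "\<dots> = (c - 1) * norm u" using c by simp
    also have "\<dots> \<le> e" using e \<open>0 < norm u + 1\<close> by (simp add: c_def field_simps)
    finally have "c *\<^sub>R u \<in> S" using e by auto
    then show False using rnorm_le_one_iff[of "c *\<^sub>R u"] rnorm_scaleR[of c u] assms c by simp
  qed
  moreover have "u \<in> S" using assms rnorm_le_one_iff[of u] by simp
  ultimately show ?thesis
    using compact_imp_closed[OF compact_S] by (simp add: frontier_def)
qed

lemma rnorm_ge_inner_div: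
  assumes "0 < h" and "\<forall>s\<in>S. s \<bullet> e \<le> h" shows "(w \<bullet> e) / h \<le> rnorm S w"
proof (rule rnorm_greatest)
  fix t assume "t \<in> dilations w"
  then have "0 < t" "((1/t) *\<^sub>R w) \<bullet> e \<le> h" using assms by (auto simp: dilations_def)
  then show "(w \<bullet> e) / h \<le> t" using assms by (simp add: field_simps)
qed

lemma rnorm_normalize_diff:
  assumes "0 < rnorm S v" "0 < rnorm S w"
  shows "rnorm S ((1 / rnorm S v) *\<^sub>R v - (1 / rnorm S w) *\<^sub>R w) \<le> 2 * rnorm S (v - w) / rnorm S w"
proof -
  have split: "(1 / rnorm S v) *\<^sub>R v - (1 / rnorm S w) *\<^sub>R w
      = (1 / rnorm S w) *\<^sub>R (v - w) + (1 / rnorm S v - 1 / rnorm S w) *\<^sub>R v"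
    by (simp add: algebra_simps)
  have "rnorm S ((1 / rnorm S v - 1 / rnorm S w) *\<^sub>R v) = \<bar>rnorm S w - rnorm S v\<bar> / rnorm S w"
    using assms by (simp add: rnorm_scaleR field_simps abs_div)
  also have "\<dots> \<le> rnorm S (v - w) / rnorm S w"
    using assms rnorm_diff_ge[of v w] rnorm_diff_ge[of w v] rnorm_minus_commute[of v w]
    by (intro divide_right_mono) auto
  finally have "rnorm S ((1 / rnorm S v - 1 / rnorm S w) *\<^sub>R v) \<le> rnorm S (v - w) / rnorm S w" .
  moreover have "rnorm S ((1 / rnorm S w) *\<^sub>R (v - w)) = rnorm S (v - w) / rnorm S w"
    using assms by (simp add: rnorm_scaleR)
  ultimately show ?thesis
    using rnorm_triangle[of "(1 / rnorm S w) *\<^sub>R (v - w)" "(1 / rnorm S v - 1 / rnorm S w) *\<^sub>R v"]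
    unfolding split by (simp add: field_simps)
qed

lemma mem_rball_zero: "y \<in> rball S 0 \<rho> \<longleftrightarrow> rnorm S y \<le> \<rho>"
  by (simp add: rball_def rdist_def rnorm_minus)

lemma mem_sector: "y \<in> sector S z \<rho> \<longleftrightarrow> y \<noteq> 0 \<and> rnorm S ((1 / rnorm S y) *\<^sub>R y - z) < \<rho>"
  by (simp add: sector_def rdist_def rproj_def)

lemma rsetdist_le: "y \<in> A \<Longrightarrow> rsetdist S x A \<le> rnorm S (x - y)"
  unfolding rsetdist_def rdist_def
  by (rule cInf_lower) (auto intro!: bdd_belowI[of _ 0] simp: rnorm_nonneg)

lemma rsetdist_ge:
  "A \<noteq> {} \<Longrightarrow> (\<And>y. y \<in> A \<Longrightarrow> c \<le> rnorm S (x - y)) \<Longrightarrow> c \<le> rsetdist S x A"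
  unfolding rsetdist_def rdist_def by (rule cInf_greatest) auto

lemma int_lattice_covering:
  obtains K where "0 < K" "\<And>p. \<exists>y\<in>int_lattice. rnorm S (p - y) \<le> K"
proof -
  obtain \<epsilon> where \<epsilon>: "0 < \<epsilon>" "cball 0 \<epsilon> \<subseteq> S" using zero_in_interior mem_interior_cball by blast
  have "\<exists>y\<in>int_lattice. rnorm S (p - y) \<le> real CARD('d) / \<epsilon>" for p
  proof -
    obtain y where "y \<in> int_lattice" "norm (p - y) \<le> real CARD('d)" using int_lattice_approx by blast
    then show ?thesis using rnorm_le_norm_div[OF \<epsilon>, of "p - y"] \<epsilon>(1)
      by (meson divide_right_mono less_imp_le order_trans)
  qed
  then show thesis using that[of "real CARD('d) / \<epsilon>"] \<epsilon>(1) by simp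
qed

lemma supporting_ball_radius_pos:
  assumes "S \<subseteq> cball c \<rho>" "w \<in> sphere c \<rho>" shows "0 < \<rho>"
proof -
  have "\<rho> \<noteq> 0"
  proof
    assume "\<rho> = 0"
    then have "S \<subseteq> {c}" using assms(1) by simp
    then show False using zero_in_interior interior_mono[of S "{c}"] by auto
  qed
  moreover have "0 \<le> \<rho>" using assms(2) by (metis mem_sphere zero_le_dist)
  ultimately show ?thesis by simp
qed

lemma supporting_ball_gain:
  assumes ball: "S \<subseteq> cball c \<rho>" "u \<in> sphere c \<rho>" and u: "rnorm S u = 1"
    and "v \<in> S" "0 \<le> b" and R: "\<forall>x\<in>S. norm x \<le> R"
  shows "a - b + b * (norm (v - u))\<^sup>2 / (2 * (R * \<rho>)) \<le> rnorm S (a *\<^sub>R u - b *\<^sub>R v)"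
proof -
  define e h N where "e = u - c" and "h = u \<bullet> e" and "N = (norm (v - u))\<^sup>2"
  have gap: "(s - u) \<bullet> e \<le> - (norm (s - u))\<^sup>2 / 2" if "s \<in> S" for s
    using inner_sphere_cball_le[of s c \<rho> u] ball that by (auto simp: e_def)
  have "0 < (norm u)\<^sup>2" using u by auto
  moreover have "(norm u)\<^sup>2 / 2 \<le> h" using gap[OF zero_in_S] by (simp add: h_def)
  ultimately have h_pos: "0 < h" by linarith
  have "u \<in> S" "norm e = \<rho>"
    using u ball rnorm_le_one_iff[of u] by (auto simp: e_def dist_norm norm_minus_commute)
  then have "h \<le> R * \<rho>"
    using norm_cauchy_schwarz[of u e] R mult_right_mono[of "norm u" R \<rho>] by (force simp: h_def)
  have support: "\<forall>s\<in>S. s \<bullet> e \<le> h"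
  proof
    fix s assume "s \<in> S"
    have "(s - u) \<bullet> e \<le> 0" using gap[OF \<open>s \<in> S\<close>] zero_le_power2[of "norm (s - u)"] by linarith
    then show "s \<bullet> e \<le> h" by (simp add: h_def inner_diff_left)
  qed
  have "v \<bullet> e \<le> h - N / 2" using gap[OF \<open>v \<in> S\<close>] by (simp add: N_def h_def inner_diff_left)
  then have "a * h - b * (h - N / 2) \<le> (a *\<^sub>R u - b *\<^sub>R v) \<bullet> e"
    using \<open>0 \<le> b\<close> by (simp add: h_def inner_diff_left mult_left_mono)
  have "a - b + b * N / (2 * h) = (a * h - b * (h - N / 2)) / h"
    using h_pos by (simp add: field_simps)
  also have "\<dots> \<le> ((a *\<^sub>R u - b *\<^sub>R v) \<bullet> e) / h"
    using \<open>a * h - b * (h - N / 2) \<le> _\<close> h_pos by (simp add: divide_right_mono)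
  also have "\<dots> \<le> rnorm S (a *\<^sub>R u - b *\<^sub>R v)" by (rule rnorm_ge_inner_div[OF h_pos support])
  finally have "a - b + b * N / (2 * h) \<le> rnorm S (a *\<^sub>R u - b *\<^sub>R v)" .
  moreover have "b * N / (2 * (R * \<rho>)) \<le> b * N / (2 * h)"
    using h_pos \<open>h \<le> R * \<rho>\<close> \<open>0 \<le> b\<close> by (intro frac_le) (auto simp: N_def)
  ultimately show ?thesis by (simp add: N_def)
qed

lemma uniformly_curved_gain:
  assumes "uniformly_curved S"
  obtains \<kappa> where "0 < \<kappa>" and "curvature_gain S \<kappa>"
proof -
  obtain \<rho> where \<rho>: "\<forall>w\<in>frontier S. \<exists>c. S \<subseteq> cball c \<rho> \<and> w \<in> sphere c \<rho>"
    using assms uniformly_curved_def by blast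
  obtain \<epsilon> where \<epsilon>: "0 < \<epsilon>" "cball 0 \<epsilon> \<subseteq> S" using zero_in_interior mem_interior_cball by blast
  obtain R where R: "0 < R" "\<forall>x\<in>S. norm x \<le> R"
    using compact_imp_bounded[OF compact_S] bounded_pos by blast
  have "S \<noteq> UNIV" using compact_imp_bounded[OF compact_S] by auto
  then have "frontier S \<noteq> {}" using frontier_not_empty zero_in_S by blast
  then have "0 < \<rho>" using \<rho> supporting_ball_radius_pos by blast
  define \<kappa> where "\<kappa> = \<epsilon>\<^sup>2 / (2 * (R * \<rho>))"
  have "curvature_gain S \<kappa>" unfolding curvature_gain_def
  proof (intro allI impI)
    fix u v :: "real^'d" and a b :: real
    assume u: "rnorm S u = 1" and v: "rnorm S v = 1" and "0 \<le> b"
    obtain c where ball: "S \<subseteq> cball c \<rho>" "u \<in> sphere c \<rho>"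
      using \<rho> rnorm_eq_one_imp_frontier[OF u] by blast
    have "\<epsilon> * rnorm S (v - u) \<le> norm (v - u)"
      using rnorm_le_norm_div[OF \<epsilon>, of "v - u"] \<epsilon>(1) by (simp add: field_simps)
    then have "(\<epsilon> * rnorm S (v - u))\<^sup>2 \<le> (norm (v - u))\<^sup>2"
      using \<epsilon>(1) rnorm_nonneg by (intro power_mono) auto
    then have "\<epsilon>\<^sup>2 * (rnorm S (v - u))\<^sup>2 \<le> (norm (v - u))\<^sup>2" by (simp add: power_mult_distrib)
    then have "\<kappa> * b * (rnorm S (v - u))\<^sup>2 \<le> b * (norm (v - u))\<^sup>2 / (2 * (R * \<rho>))"
      using \<open>0 \<le> b\<close> R(1) \<open>0 < \<rho>\<close> by (simp add: \<kappa>_def field_simps mult_left_mono)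
    moreover have "v \<in> S" using v rnorm_le_one_iff[of v] by simp
    ultimately show "a - b + \<kappa> * b * (rnorm S (v - u))\<^sup>2 \<le> rnorm S (a *\<^sub>R u - b *\<^sub>R v)"
      using supporting_ball_gain[OF ball u _ \<open>0 \<le> b\<close> R(2), of v a] by simp
  qed
  moreover have "0 < \<kappa>" using \<epsilon> R \<open>0 < \<rho>\<close> by (simp add: \<kappa>_def)
  ultimately show thesis using that by blast
qed

lemma rsetdist_R0_le:
  fixes n :: nat
  assumes lattice: "\<And>p. \<exists>y\<in>int_lattice. rnorm S (p - y) \<le> K"
    and "0 < \<delta>" and x: "x \<in> sector S z r" "real n \<le> rnorm S x"
    and room: "real n powr \<beta> + 2 * K < \<delta> * real n / (1 + \<delta>)"
    and angle: "2 * K / (real n - real n powr \<beta> - K) < real n powr (\<alpha> - 1)"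
  shows "rsetdist S x (R0 S z r \<delta> \<beta> \<alpha> n) \<le> rnorm S x - real n + real n powr \<beta> + 2 * K"
proof -
  define a u t where "a = rnorm S x" and "u = (1 / a) *\<^sub>R x" and "t = real n - real n powr \<beta> - K"
  have "0 \<le> K" using lattice[of 0] rnorm_nonneg order_trans by blast
  have "0 < a" using x by (simp add: a_def mem_sector rnorm_pos_iff)
  then have x_eq: "x = a *\<^sub>R u" and u: "rnorm S u = 1" and "rnorm S (u - z) < r"
    using x by (auto simp: u_def a_def rnorm_scaleR mem_sector)
  have "real n - real n / (1 + \<delta>) = \<delta> * real n / (1 + \<delta>)" using \<open>0 < \<delta>\<close> by (simp add: field_simps)
  then have t_big: "real n / (1 + \<delta>) + K < t" using room by (simp add: t_def)
  have "0 \<le> real n / (1 + \<delta>)" using \<open>0 < \<delta>\<close> by simp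
  then have "0 < t" using t_big \<open>0 \<le> K\<close> by linarith
  define p where "p = t *\<^sub>R u"
  have p: "rnorm S p = t" "u = (1 / rnorm S p) *\<^sub>R p"
    using \<open>0 < t\<close> u by (simp_all add: p_def rnorm_scaleR)
  obtain y where "y \<in> int_lattice" and py: "rnorm S (p - y) \<le> K" using lattice by blast
  have y_upper: "rnorm S y \<le> real n - real n powr \<beta>"
    using rnorm_diff_ge[of y p] rnorm_minus_commute[of p y] py p(1) by (simp add: t_def)
  have y_lower: "real n / (1 + \<delta>) < rnorm S y"
    using rnorm_diff_ge[of p y] py p(1) t_big by simp
  then have "0 < rnorm S y" using \<open>0 \<le> real n / (1 + \<delta>)\<close> by linarith
  have "rnorm S ((1 / rnorm S y) *\<^sub>R y - u) \<le> 2 * rnorm S (y - p) / t"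
    using rnorm_normalize_diff[of y p] \<open>0 < rnorm S y\<close> \<open>0 < t\<close> p by simp
  also have "\<dots> \<le> 2 * K / t"
    using py rnorm_minus_commute[of p y] \<open>0 < t\<close> by (simp add: divide_right_mono)
  finally have "rnorm S ((1 / rnorm S y) *\<^sub>R y - z) < r + real n powr (\<alpha> - 1)"
    using rnorm_triangle_diff[of "(1 / rnorm S y) *\<^sub>R y" z u] \<open>rnorm S (u - z) < r\<close> angle
    by (simp add: t_def)
  then have "y \<in> R0 S z r \<delta> \<beta> \<alpha> n"
    using \<open>y \<in> int_lattice\<close> y_upper y_lower \<open>0 < rnorm S y\<close>
    by (auto simp: R0_def rannulus_def mem_rball_zero mem_sector)
  then have "rsetdist S x (R0 S z r \<delta> \<beta> \<alpha> n) \<le> rnorm S (x - y)" by (rule rsetdist_le)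
  also have "\<dots> \<le> rnorm S (x - p) + rnorm S (p - y)" by (rule rnorm_triangle_diff)
  also have "rnorm S (x - p) = a - t"
  proof -
    have "x - p = (a - t) *\<^sub>R u" by (simp add: x_eq p_def algebra_simps)
    moreover have "t \<le> a"
      using x(2) \<open>0 \<le> K\<close> powr_ge_zero[of "real n" \<beta>] unfolding a_def t_def by linarith
    ultimately show ?thesis using u by (simp add: rnorm_scaleR)
  qed
  finally show ?thesis using py by (simp add: a_def t_def)
qed

lemma rsetdist_B0_ge:
  fixes n :: nat
  assumes gain: "curvature_gain S \<kappa>" and "0 \<le> \<kappa>" "0 < \<delta>" and x: "x \<in> sector S z r"
    and inner: "M \<le> \<delta> * real n / (1 + \<delta>)"
    and outer: "M + real n powr \<beta> \<le> \<kappa> * (real n / (1 + \<delta>)) * (real n powr (\<alpha> - 1))\<^sup>2"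
  shows "rnorm S x - real n + M \<le> rsetdist S x (B0 S z r \<delta> \<beta> \<alpha> n)"
proof -
  define a u where "a = rnorm S x" and "u = (1 / a) *\<^sub>R x"
  have "0 < a" using x by (simp add: a_def mem_sector rnorm_pos_iff)
  then have x_eq: "x = a *\<^sub>R u" and u: "rnorm S u = 1" and "rnorm S (u - z) < r"
    using x by (auto simp: u_def a_def rnorm_scaleR mem_sector)
  have "0 \<le> real n / (1 + \<delta>)" using \<open>0 < \<delta>\<close> by simp
  then have "0 \<in> B0 S z r \<delta> \<beta> \<alpha> n" by (simp add: B0_def mem_rball_zero int_lattice_def)
  then have "B0 S z r \<delta> \<beta> \<alpha> n \<noteq> {}" by blast
  then show ?thesis
  proof (rule rsetdist_ge)
    fix y assume "y \<in> B0 S z r \<delta> \<beta> \<alpha> n"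
    then consider (inside) "rnorm S y \<le> real n / (1 + \<delta>)"
      | (beside) "real n / (1 + \<delta>) < rnorm S y" "rnorm S y \<le> real n + real n powr \<beta>"
        "y \<notin> sector S z (r + real n powr (\<alpha> - 1))"
      by (force simp: B0_def rannulus_def mem_rball_zero)
    then show "rnorm S x - real n + M \<le> rnorm S (x - y)"
    proof cases
      case inside
      have "real n - real n / (1 + \<delta>) = \<delta> * real n / (1 + \<delta>)"
        using \<open>0 < \<delta>\<close> by (simp add: field_simps)
      then show ?thesis using inside inner rnorm_diff_ge[of x y] by linarith
    next
      case beside
      define b v where "b = rnorm S y" and "v = (1 / b) *\<^sub>R y"
      have "0 < b" using beside \<open>0 \<le> real n / (1 + \<delta>)\<close> by (simp add: b_def)
      then have y_eq: "y = b *\<^sub>R v" and v: "rnorm S v = 1" and "y \<noteq> 0"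
        by (auto simp: v_def b_def rnorm_scaleR)
      have "r + real n powr (\<alpha> - 1) \<le> rnorm S (v - z)"
        using beside(3) \<open>y \<noteq> 0\<close> by (simp add: mem_sector v_def b_def)
      then have "real n powr (\<alpha> - 1) \<le> rnorm S (v - u)"
        using rnorm_triangle_diff[of v z u] rnorm_minus_commute[of u z] \<open>rnorm S (u - z) < r\<close> by simp
      then have "(real n powr (\<alpha> - 1))\<^sup>2 \<le> (rnorm S (v - u))\<^sup>2" by (simp add: power_mono)
      then have "\<kappa> * (real n / (1 + \<delta>)) * (real n powr (\<alpha> - 1))\<^sup>2
          \<le> \<kappa> * b * (rnorm S (v - u))\<^sup>2"
        using beside(1) \<open>0 \<le> \<kappa>\<close> \<open>0 \<le> real n / (1 + \<delta>)\<close>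
        by (intro mult_mono mult_left_mono) (auto simp: b_def)
      moreover have "a - b + \<kappa> * b * (rnorm S (v - u))\<^sup>2 \<le> rnorm S (x - y)"
        using gain u v \<open>0 < b\<close> by (simp add: curvature_gain_def x_eq y_eq)
      ultimately show ?thesis using beside(2) outer by (simp add: a_def b_def)
    qed
  qed
qed

end

lemma eventually_growth_bounds:
  fixes \<delta> \<beta> \<alpha> K \<kappa> :: real
  assumes "0 < \<delta>" "1/2 < \<beta>" "\<beta> < 1" "\<alpha> < 1" "(\<beta> + 1) / 2 < \<alpha>" "0 < K" "0 < \<kappa>"
  shows "\<forall>\<^sub>F n in sequentially.
      real n powr \<beta> + 2 * K + 4 * (\<delta> * real n) powr \<beta> + 1 \<le> \<delta> * real n / (1 + \<delta>)"
    and "\<forall>\<^sub>F n in sequentially. 2 * K / (real n - real n powr \<beta> - K) < real n powr (\<alpha> - 1)"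
    and "\<forall>\<^sub>F n in sequentially. 2 * real n powr \<beta> + 2 * K + 4 * (\<delta> * real n) powr \<beta> + 1
      \<le> \<kappa> * (real n / (1 + \<delta>)) * (real n powr (\<alpha> - 1))\<^sup>2"
  using assms by - (rule eventually_compose_filterlim[OF _ filterlim_real_sequentially], real_asymp)+

theorem claim1:
  fixes S :: "(real^'d) set" and z :: "real^'d" and r \<delta> \<beta> \<alpha> :: real
  assumes "compact S" and "convex S" and "0 \<in> interior S"
    and "\<forall>x\<in>S. - x \<in> S"
    and "uniformly_curved S"
    and "z \<in> frontier S" and "0 < r"
    and "0 < \<delta>" and "\<delta> < 1"
    and "1/2 < \<beta>" and "\<beta> < 1"
    and "1/2 < \<alpha>" and "\<alpha> < 1" and "(\<beta> + 1) / 2 < \<alpha>"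
  shows "\<forall>\<^sub>F n in sequentially.
           \<forall>x \<in> R1 S z r \<delta> \<beta> n.
             rsetdist S x (R0 S z r \<delta> \<beta> \<alpha> n) + 4 * (\<delta> * real n) powr \<beta>
               < rsetdist S x (B0 S z r \<delta> \<beta> \<alpha> n)"
proof -
  interpret symmetric_convex_body S using assms(1-4) by unfold_locales
  obtain K where "0 < K" and lattice: "\<And>p. \<exists>y\<in>int_lattice. rnorm S (p - y) \<le> K"
    using int_lattice_covering by blast
  obtain \<kappa> where "0 < \<kappa>" and gain: "curvature_gain S \<kappa>"
    using uniformly_curved_gain[OF assms(5)] by blast
  show ?thesis
    using eventually_growth_bounds[OF assms(8,10,11,13,14) \<open>0 < K\<close> \<open>0 < \<kappa>\<close>]
  proof eventually_elim
    case (elim n)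
    \<comment> \<open>the extra 1 turns a lower bound for every point of B0 into a strict bound on the infimum\<close>
    define M where "M = real n powr \<beta> + 2 * K + 4 * (\<delta> * real n) powr \<beta> + 1"
    show ?case
    proof
      fix x assume "x \<in> R1 S z r \<delta> \<beta> n"
      then have x: "x \<in> sector S z r" "real n \<le> rnorm S x"
        by (auto simp: R1_def rannulus_def mem_rball_zero)
      have "rsetdist S x (R0 S z r \<delta> \<beta> \<alpha> n) \<le> rnorm S x - real n + real n powr \<beta> + 2 * K"
        using elim(1,2) powr_ge_zero[of "\<delta> * real n" \<beta>]
        by (intro rsetdist_R0_le[OF lattice assms(8) x]) linarith+
      moreover have "rnorm S x - real n + M \<le> rsetdist S x (B0 S z r \<delta> \<beta> \<alpha> n)"
        using elim(1,3) \<open>0 < \<kappa>\<close> unfolding M_def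
        by (intro rsetdist_B0_ge[OF gain _ assms(8) x(1)]) linarith+
      ultimately show "rsetdist S x (R0 S z r \<delta> \<beta> \<alpha> n) + 4 * (\<delta> * real n) powr \<beta>
          < rsetdist S x (B0 S z r \<delta> \<beta> \<alpha> n)"
        unfolding M_def by linarith
    qed
  qed
qed

end
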